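(* Let $G$ be a graph with maximum degree $\Delta$, let $\mathrm{col}$ be a partial proper coloring of $G$ with colors in $[\Delta+1]$, let $K$ be an almost-clique of an $\epsilon$-almost-clique decomposition of $G$ (for some $\epsilon\in(0,1/3)$), and let $M$ be a colorful matching in $K$ with respect to $\mathrm{col}$. Then for all $v\in K$, \[ |\Psi_K| \ge |\widehat{K}|+1+e_v-a_v+|M|, \] where $\Psi_K=[\Delta+1]\setminus\mathrm{col}(K)$, $\widehat K$ is the set of uncolored nodes of $K$, $e_v=|N(v)\setminus K|$ and $a_v=|K\setminus N(v)|$.
   Context: A partial coloring is a map $\mathrm{col}:V\to[\Delta+1]\cup\{\bot\}$ ($\bot$ meaning uncolored) such that adjacent nodes that are both colored get different colors; $\mathrm{col}(K)$ is the set of colors assigned to colored nodes of $K$. For $\epsilon\in(0,1/3)$, an $\epsilon$-almost-clique decomposition is a partition of $V$ into $V_{\mathrm{sparse}},K_1,\ldots,K_k$ where nodes in $V_{\mathrm{sparse}}$ are $\Omega(\epsilon^2\Delta)$-sparse (sparsity $\zeta_v=\frac1\Delta(\binom{\Delta}{2}-m(N(v)))$, $m(N(v))$ the number of edges inside the neighborhood $N(v)$) and each almost-clique $K_i$ satisfies $|K_i|\le(1+\epsilon)\Delta$, $|N(v)\cap K_i|\ge(1-\epsilon)\Delta$ for $v\in K_i$, and $|N(v)\cap K_i|\le(1-\epsilon/2)\Delta$ for $v\notin K_i$. An anti-edge is a pair of distinct non-adjacent nodes. A colorful matching in $K$ is a set of pairwise disjoint anti-edges with both endpoints in $K$ such that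 the two endpoints of each anti-edge are colored with the same color, and different anti-edges of the matching have different colors. *)

theory Defs
  imports Complex_Main "HOL-Library.Disjoint_Sets"
begin

definition graph :: "'a set \<Rightarrow> ('a \<Rightarrow> 'a \<Rightarrow> bool) \<Rightarrow> bool" where
  "graph V E \<longleftrightarrow> finite V \<and> (\<forall>u w. E u w \<longrightarrow> u \<in> V \<and> w \<in> V)
     \<and> (\<forall>u w. E u w \<longrightarrow> E w u) \<and> (\<forall>u. \<not> E u u)"

definition nbhd :: "'a set \<Rightarrow> ('a \<Rightarrow> 'a \<Rightarrow> bool) \<Rightarrow> 'a \<Rightarrow> 'a set" where
  "nbhd V E v = {u \<in> V. E v u}"

definition max_degree :: "'a set \<Rightarrow> ('a \<Rightarrow> 'a \<Rightarrow> bool) \<Rightarrow> nat" where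
  "max_degree V E = Max ({card (nbhd V E v) | v. v \<in> V} \<union> {0})"

text \<open>Partial proper colouring with colours in [\<Delta>+1] = {1..\<Delta>+1}; None = uncoloured.\<close>
definition partial_coloring ::
  "'a set \<Rightarrow> ('a \<Rightarrow> 'a \<Rightarrow> bool) \<Rightarrow> nat \<Rightarrow> ('a \<Rightarrow> nat option) \<Rightarrow> bool" where
  "partial_coloring V E \<Delta> col \<longleftrightarrow>
     (\<forall>v \<in> V. \<forall>c. col v = Some c \<longrightarrow> c \<in> {1..\<Delta>+1})
     \<and> (\<forall>u \<in> V. \<forall>w \<in> V. E u w \<and> col u \<noteq> None \<and> col w \<noteq> None \<longrightarrow> col u \<noteq> col w)"

definition col_set :: "('a \<Rightarrow> nat option) \<Rightarrow> 'a set \<Rightarrow> nat set" where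
  "col_set col K = {c. \<exists>v \<in> K. col v = Some c}"

definition edges_in :: "('a \<Rightarrow> 'a \<Rightarrow> bool) \<Rightarrow> 'a set \<Rightarrow> nat" where
  "edges_in E S = card {{x, y} | x y. x \<in> S \<and> y \<in> S \<and> E x y}"

definition sparsity :: "'a set \<Rightarrow> ('a \<Rightarrow> 'a \<Rightarrow> bool) \<Rightarrow> 'a \<Rightarrow> real" where
  "sparsity V E v = (let \<Delta> = max_degree V E in
     (1 / real \<Delta>) * (real (\<Delta> choose 2) - real (edges_in E (nbhd V E v))))"

text \<open>\<epsilon>-almost-clique decomposition; the hidden constant of \<Omega>(\<epsilon>^2 \<Delta>) is the explicit c.\<close>
definition acd :: "'a set \<Rightarrow> ('a \<Rightarrow> 'a \<Rightarrow> bool) \<Rightarrow> real \<Rightarrow> real \<Rightarrow> 'a set \<Rightarrow> 'a set set \<Rightarrow> bool" where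
  "acd V E \<epsilon> c Vs Ks \<longleftrightarrow>
     (let \<Delta> = max_degree V E in
       Vs \<subseteq> V \<and> (\<forall>K \<in> Ks. K \<noteq> {} \<and> K \<subseteq> V \<and> Vs \<inter> K = {}) \<and> disjoint Ks
       \<and> Vs \<union> \<Union>Ks = V
       \<and> (\<forall>v \<in> Vs. sparsity V E v \<ge> c * \<epsilon>^2 * real \<Delta>)
       \<and> (\<forall>K \<in> Ks. real (card K) \<le> (1 + \<epsilon>) * real \<Delta>
            \<and> (\<forall>v \<in> K. real (card (nbhd V E v \<inter> K)) \<ge> (1 - \<epsilon>) * real \<Delta>)
            \<and> (\<forall>v \<in> V - K. real (card (nbhd V E v \<inter> K)) \<le> (1 - \<epsilon>/2) * real \<Delta>)))"

definition anti_edge :: "('a \<Rightarrow> 'a \<Rightarrow> bool) \<Rightarrow> 'a \<Rightarrow> 'a \<Rightarrow> bool" where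
  "anti_edge E u w \<longleftrightarrow> u \<noteq> w \<and> \<not> E u w"

definition colorful_matching ::
  "('a \<Rightarrow> 'a \<Rightarrow> bool) \<Rightarrow> ('a \<Rightarrow> nat option) \<Rightarrow> 'a set \<Rightarrow> 'a set set \<Rightarrow> bool" where
  "colorful_matching E col K M \<longleftrightarrow>
     (\<forall>e \<in> M. \<exists>u w. e = {u, w} \<and> anti_edge E u w \<and> u \<in> K \<and> w \<in> K
                   \<and> col u \<noteq> None \<and> col u = col w)
     \<and> disjoint M
     \<and> (\<forall>e \<in> M. \<forall>e' \<in> M. \<forall>x \<in> e. \<forall>y \<in> e'. e \<noteq> e' \<longrightarrow> col x \<noteq> col y)"

end

theory Submission
  imports Defs
begin

text \<open>Each anti-edge of a colorful matching spends two colored nodes of \<open>K\<close> on a single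
  color, so \<open>K\<close> has at least \<open>|col(K)| + |M|\<close> colored nodes. Since \<open>|K| - a\<^sub>v + e\<^sub>v = deg v \<le> \<Delta>\<close>, at least
  \<open>\<Delta> + 1 - |col(K)| \<ge> \<Delta> + 1 - |K| + |M| + (number of uncolored nodes of K)\<close> colors are
  missing from \<open>K\<close>, which gives the claim.\<close>

lemma card_image_add_card_le:
  fixes g :: "'a \<Rightarrow> 'b"
  assumes "finite C" and "disjoint M"
    and "\<And>e. e \<in> M \<Longrightarrow> e \<subseteq> C"
    and "\<And>e. e \<in> M \<Longrightarrow> \<exists>x\<in>e. \<exists>y\<in>e. x \<noteq> y"
    and "\<And>e x y. e \<in> M \<Longrightarrow> x \<in> e \<Longrightarrow> y \<in> e \<Longrightarrow> g x = g y"
  shows "card (g ` C) + card M \<le> card C"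
proof -
  have "finite M"
    using assms(1,3) by (meson Pow_iff finite_Pow_iff finite_subset subsetI)
  then show ?thesis
    using assms
  proof (induction M arbitrary: C)
    case empty
    show ?case by (simp add: card_image_le \<open>finite C\<close>)
  next
    case (insert e M)
    obtain x y where xy: "x \<in> e" "y \<in> e" "x \<noteq> y"
      using insert.prems(4) by blast
    have "x \<in> C" "y \<in> C - {x}"
      using xy insert.prems(3) by auto
    moreover have "g x = g y"
      using insert.prems(5)[OF insertI1 xy(1,2)] .
    ultimately have same_image: "g ` (C - {x}) = g ` C"
      by (auto intro: rev_image_eqI)
    have "e' \<subseteq> C - {x}" if "e' \<in> M" for e'
      using that insert.hyps(2) insert.prems(2,3) xy(1)
      by (auto simp: pairwise_insert disjnt_def)
    then have "card (g ` (C - {x})) + card M \<le> card (C - {x})"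
      using insert.prems
      by (intro insert.IH) (auto simp: pairwise_insert intro: insert.prems(5)[OF insertI2])
    then show ?case
      using same_image card.remove[OF insert.prems(1) \<open>x \<in> C\<close>] insert.hyps by simp
  qed
qed

lemma col_set_eq_image: "col_set col K = (\<lambda>u. the (col u)) ` {u \<in> K. col u \<noteq> None}"
  unfolding col_set_def by force

lemma colorful_matching_card_le:
  assumes "finite K" and "colorful_matching E col K M"
  shows "card (col_set col K) + card M \<le> card {u \<in> K. col u \<noteq> None}"
  unfolding col_set_eq_image
proof (rule card_image_add_card_le)
  have anti_edges: "\<forall>e \<in> M. \<exists>u w. e = {u, w} \<and> anti_edge E u w \<and> u \<in> K \<and> w \<in> K
                   \<and> col u \<noteq> None \<and> col u = col w"
    using assms(2) unfolding colorful_matching_def by (elim conjE)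
  show "disjoint M"
    using assms(2) unfolding colorful_matching_def by (elim conjE)
  fix e assume "e \<in> M"
  then obtain u w where "e = {u, w}" "anti_edge E u w" "u \<in> K" "w \<in> K"
      "col u \<noteq> None" "col u = col w"
    using bspec[OF anti_edges \<open>e \<in> M\<close>] by (elim exE conjE) (rule that)
  then show "e \<subseteq> {u \<in> K. col u \<noteq> None}" and "\<exists>x\<in>e. \<exists>y\<in>e. x \<noteq> y"
    and "\<And>x y. x \<in> e \<Longrightarrow> y \<in> e \<Longrightarrow> the (col x) = the (col y)"
    by (auto simp: anti_edge_def)
qed (use assms(1) in simp)

lemma card_nbhd_le_max_degree:
  assumes "finite V" and "v \<in> V"
  shows "card (nbhd V E v) \<le> max_degree V E"
  unfolding max_degree_def using assms by (intro Max_ge) auto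

lemma col_set_subset_colors:
  assumes "partial_coloring V E \<Delta> col" and "K \<subseteq> V"
  shows "col_set col K \<subseteq> {1..\<Delta> + 1}"
  using assms unfolding partial_coloring_def col_set_def by blast

lemma acd_clique_subset:
  assumes "acd V E \<epsilon> c Vs Ks" and "K \<in> Ks"
  shows "K \<subseteq> V"
  using assms unfolding acd_def Let_def by blast

theorem claim2p1:
  fixes V :: "'a set" and E :: "'a \<Rightarrow> 'a \<Rightarrow> bool" and col :: "'a \<Rightarrow> nat option"
    and \<epsilon> c :: real and Vs K :: "'a set" and Ks M :: "'a set set" and v :: 'a
  assumes "graph V E"
    and "partial_coloring V E (max_degree V E) col"
    and "0 < \<epsilon>" and "\<epsilon> < 1/3" and "0 < c"
    and "acd V E \<epsilon> c Vs Ks" and "K \<in> Ks"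
    and "colorful_matching E col K M"
    and "v \<in> K"
  shows "int (card ({1..max_degree V E + 1} - col_set col K))
     \<ge> int (card {u \<in> K. col u = None}) + 1 + int (card (nbhd V E v - K))
        - int (card (K - nbhd V E v)) + int (card M)"
proof -
  let ?\<Delta> = "max_degree V E" and ?N = "nbhd V E v"
  have "finite V" using assms(1) unfolding graph_def by blast
  have "K \<subseteq> V" using acd_clique_subset[OF assms(6,7)] .
  have "finite K" using finite_subset[OF \<open>K \<subseteq> V\<close> \<open>finite V\<close>] .
  have "finite ?N" using \<open>finite V\<close> unfolding nbhd_def by simp
  have "card ?N \<le> ?\<Delta>"
    using card_nbhd_le_max_degree[OF \<open>finite V\<close>] \<open>K \<subseteq> V\<close> assms(9) by blast
  moreover have "card ?N = card (?N \<inter> K) + card (?N - K)"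
    using card_Int_Diff[OF \<open>finite ?N\<close>] .
  moreover have "card K = card (?N \<inter> K) + card (K - ?N)"
    using card_Int_Diff[OF \<open>finite K\<close>, of ?N] by (simp add: Int_commute)
  moreover have "card K = card {u \<in> K. col u = None} + card {u \<in> K. col u \<noteq> None}"
    using card_Int_Diff[OF \<open>finite K\<close>, of "{u. col u = None}"] by (simp add: Int_def set_diff_eq)
  moreover have "card (col_set col K) + card M \<le> card {u \<in> K. col u \<noteq> None}"
    using colorful_matching_card_le[OF \<open>finite K\<close> assms(8)] .
  moreover have "card ({1..?\<Delta> + 1} - col_set col K) = ?\<Delta> + 1 - card (col_set col K)"
    and "card (col_set col K) \<le> ?\<Delta> + 1"
    using col_set_subset_colors[OF assms(2) \<open>K \<subseteq> V\<close>]
    by (auto simp: card_Diff_subset finite_subset dest: card_mono[rotated])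
  ultimately show ?thesis by linarith
qed

end
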